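(* Let $O,A,B$ be three pairwise distinct points of the plane, $\vec\alpha=\overrightarrow{AO}/OA$, $\vec\beta=\overrightarrow{OB}/OB$, with oriented angle $\Omega=(\widehat{\vec\alpha,\vec\beta})\in\,]0,\pi[$. Let $p\ge2$, $\theta_0=\Omega/p$, and let $\mathcal{E}_p$ be the set of curves in $\mathcal{E}$ consisting of $p$ consecutive arcs of circle of radii $R_0,\dots,R_{p-1}>0$, each turning counterclockwise by the angle $\theta_0$, starting at $A$ with tangent $\vec\alpha$; identify such a curve with $R=(R_0,\dots,R_{p-1})\in(\mathbb{R}_+^* )^p$, so that $\mathcal{E}_p=\{R\in(\mathbb{R}_+^* )^p:\mathcal{A}R=\mathcal{B}\}$ with $\mathcal{A},\mathcal{B}$ as in the context. If $\mathcal{E}_p$ is nonempty, then there exists $X\in\mathcal{E}_p$ minimizing the maximum of the curvature: $$\big\|\,\|X''\|\,\big\|_{L^\infty(0,L(X))}=\min_{Z\in\mathcal{E}_p}\big\|\,\|Z''\|\,\big\|_{L^\infty(0,L(Z))}.$$ Setting $F(X)=\min_{1\le k\le p}X_k$ for $X=(X_1,\dots,X_p)\in\mathbb{R}_+^p$, this problem is equivalent to $$F(X)=\max_{Z\in(\mathbb{R}_+^* )^p,\ \mathcal{A}Z=\mathcal{B}}F(Z),$$ which admits a solution as soon as there exists $X^0\in(\mathbb{R}_+^* )^p$ with $\mathcal{A}X^0=\mathcal{B}$.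
   Context: $\mathcal{E}$ is the set of curves $X:[0,L]\to\mathbb{R}^2$ ($L>0$), $X\in W^{2,\infty}(0,L;\mathbb{R}^2)$, with $\|X'(s)\|=1$, $X(0)=A$, $X(L)=B$, $X'(0)=\vec\alpha$, $X'(L)=\vec\beta$, and nondecreasing continuous angle $\phi(s)=(\widehat{\vec\alpha,X'(s)})$. Identifying the plane with $\mathbb{C}$ via the orthonormal frame with origin $A$ and first axis $\vec\alpha$, with $b$ the affix of $B$: $\mathcal{A}\in\mathcal{M}_{2,p}(\mathbb{R})$ has entries $\mathcal{A}_{1,k}=\operatorname{Re}(i(1-e^{i\theta_0})e^{i(k-1)\theta_0})$, $\mathcal{A}_{2,k}=\operatorname{Im}(i(1-e^{i\theta_0})e^{i(k-1)\theta_0})$, and $\mathcal{B}=(\operatorname{Re}b,\operatorname{Im}b)^T$. $\|\,\|X''\|\,\|_{L^\infty}$ is the essential supremum of $\|X''\|$. *)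

theory Defs
  imports "HOL-Analysis.Analysis" "HOL-Probability.Essential_Supremum"
begin

text \<open>Frame: origin A, first axis the unit vector alpha (a unit complex number).
  A point P of the plane has affix (P - A) / alpha in this frame.\<close>

definition unit_dir :: "complex \<Rightarrow> complex \<Rightarrow> complex" where
  "unit_dir P Q = (Q - P) / complex_of_real (cmod (Q - P))"

text \<open>Column k (0-based; column k+1 of the paper) of the matrix A, as a complex number:
  its real part is the first row entry, its imaginary part the second row entry.\<close>
definition colA :: "real \<Rightarrow> nat \<Rightarrow> complex" where
  "colA \<theta>0 k = \<i> * (1 - exp (\<i> * of_real \<theta>0)) * exp (\<i> * of_real (real k * \<theta>0))"

definition Ep :: "nat \<Rightarrow> real \<Rightarrow> complex \<Rightarrow> (nat \<Rightarrow> real) set" where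
  "Ep p \<theta>0 b = {R. (\<forall>k<p. 0 < R k)
      \<and> (\<Sum>k<p. R k * Re (colA \<theta>0 k)) = Re b
      \<and> (\<Sum>k<p. R k * Im (colA \<theta>0 k)) = Im b}"

definition arcs_len :: "nat \<Rightarrow> real \<Rightarrow> (nat \<Rightarrow> real) \<Rightarrow> real" where
  "arcs_len p \<theta>0 R = \<theta>0 * (\<Sum>k<p. R k)"

text \<open>Arc-length parametrisation, in frame coordinates, of the curve made of p consecutive
  counterclockwise arcs of radii R k turning by theta0, starting at 0 with tangent 1.
  At arc length s, the k-th arc has turned by the clipped angle
  max 0 (min theta0 ((s - theta0 * sum_{j<k} R j) / R k)).\<close>
definition arcs_frame :: "nat \<Rightarrow> real \<Rightarrow> (nat \<Rightarrow> real) \<Rightarrow> real \<Rightarrow> complex" where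
  "arcs_frame p \<theta>0 R s = (\<Sum>k<p.
      complex_of_real (R k) * (- \<i>) *
        (exp (\<i> * of_real (real k * \<theta>0
                + max 0 (min \<theta>0 ((s - \<theta>0 * (\<Sum>j<k. R j)) / R k))))
         - exp (\<i> * of_real (real k * \<theta>0))))"

definition arcs_curve :: "complex \<Rightarrow> complex \<Rightarrow> nat \<Rightarrow> real \<Rightarrow> (nat \<Rightarrow> real) \<Rightarrow> real \<Rightarrow> complex" where
  "arcs_curve A \<alpha> p \<theta>0 R s = A + \<alpha> * arcs_frame p \<theta>0 R s"

definition Linf_curv :: "real \<Rightarrow> (real \<Rightarrow> complex) \<Rightarrow> ereal" where
  "Linf_curv L X = esssup (lebesgue_on {0..L})
     (\<lambda>s. ereal (norm (vector_derivative (\<lambda>t. vector_derivative X (at t)) (at s))))"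

definition Fmin :: "nat \<Rightarrow> (nat \<Rightarrow> real) \<Rightarrow> real" where
  "Fmin p R = Min (R ` {..<p})"

end

theory Submission
  imports Defs
begin

(* On its k-th arc the curve is a circle of radius R k run through at unit speed, so away from
   the p + 1 junction points |X''| equals 1 / R k; the essential supremum ignores the junctions
   and equals max_k 1 / R k = 1 / F(R). Minimising the maximal curvature over E_p is therefore
   the same as maximising F.
   Since (k + 1) theta0 <= Omega < pi, the second row of the matrix A has positive entries, so
   the constraint A R = B bounds every R k. F is continuous and attains its maximum on the
   compact set of nonnegative solutions; as the maximum is at least F(X0) > 0, the maximiser
   has positive entries and lies in E_p. *)

lemma Fmin_le: "k < p \<Longrightarrow> Fmin p R \<le> R k"
  by (auto simp: Fmin_def)

lemma Fmin_in_image: "0 < p \<Longrightarrow> Fmin p R \<in> R ` {..<p}"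
  unfolding Fmin_def by (intro Min_in) auto

lemma Fmin_pos: "0 < p \<Longrightarrow> \<forall>k<p. 0 < R k \<Longrightarrow> 0 < Fmin p R"
  using Fmin_in_image[of p R] by auto

lemma Fmin_cong: "(\<And>k. k < p \<Longrightarrow> R k = R' k) \<Longrightarrow> Fmin p R = Fmin p R'"
  unfolding Fmin_def by (metis image_cong lessThan_iff)

lemma continuous_on_Fmin: "0 < p \<Longrightarrow> continuous_on UNIV (Fmin p)"
proof (induction p rule: nat_induct_non_zero)
  case 1
  then show ?case by (simp add: Fmin_def lessThan_Suc)
next
  case (Suc n)
  have "Fmin (Suc n) = (\<lambda>R. min (R n) (Fmin n R))"
    using Suc by (auto simp: Fmin_def lessThan_Suc intro!: ext Min_insert)
  then show ?case using Suc by (auto intro!: continuous_intros)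
qed

lemma Max_reciprocal_eq_reciprocal_Fmin:
  assumes "0 < p" and "\<forall>k<p. 0 < R k"
  shows "Max ((\<lambda>k. 1 / R k) ` {..<p}) = 1 / Fmin p R"
proof (rule Max_eqI)
  obtain k0 where "k0 < p" "Fmin p R = R k0"
    using Fmin_in_image[OF assms(1), of R] by blast
  then show "1 / Fmin p R \<in> (\<lambda>k. 1 / R k) ` {..<p}"
    by simp
  show "y \<le> 1 / Fmin p R" if y: "y \<in> (\<lambda>k. 1 / R k) ` {..<p}" for y
  proof -
    obtain k where k: "k < p" "y = 1 / R k"
      using y by blast
    show ?thesis
      unfolding k(2) by (rule frac_le) (use Fmin_le[OF k(1)] Fmin_pos[OF assms] in auto)
  qed
qed simp

definition positive_solutions :: "nat \<Rightarrow> (nat \<Rightarrow> complex) \<Rightarrow> complex \<Rightarrow> (nat \<Rightarrow> real) set" where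
  "positive_solutions p c b = {R. (\<forall>k<p. 0 < R k) \<and> (\<Sum>k<p. of_real (R k) * c k) = b}"

lemma Ep_eq_positive_solutions: "Ep p \<theta>0 b = positive_solutions p (colA \<theta>0) b"
  by (auto simp: Ep_def positive_solutions_def complex_eq_iff)

lemma compact_truncated_solutions:
  fixes c :: "nat \<Rightarrow> complex"
  shows "compact {R \<in> PiE UNIV (\<lambda>k. if k < p then {0..C} else {0}). (\<Sum>k<p. of_real (R k) * c k) = b}"
proof -
  have "compactin (product_topology (\<lambda>_. euclidean) UNIV)
          (PiE UNIV (\<lambda>k. if k < p then {0..C} else {0::real}))"
    by (subst compactin_PiE) auto
  then have "compact (PiE UNIV (\<lambda>k. if k < p then {0..C} else {0::real}))"
    by (simp add: euclidean_product_topology)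
  moreover have "continuous_on UNIV (\<lambda>R :: nat \<Rightarrow> real. \<Sum>k<p. of_real (R k) * c k)"
    by (intro continuous_intros continuous_on_product_then_coordinatewise continuous_on_id)
  then have "closed {R. (\<Sum>k<p. of_real (R k) * c k) = b}"
    by (rule closed_Collect_eq[OF _ continuous_on_const])
  ultimately show ?thesis
    unfolding Collect_conj_eq[of "\<lambda>R. R \<in> _", simplified] by (rule compact_Int_closed)
qed

lemma Fmin_attains_max_on_positive_solutions:
  assumes p: "0 < p" and Im_pos: "\<forall>k<p. 0 < Im (c k)"
    and X0: "X0 \<in> positive_solutions p c b"
  shows "\<exists>X\<in>positive_solutions p c b. \<forall>Z\<in>positive_solutions p c b. Fmin p Z \<le> Fmin p X"
proof -
  let ?S = "positive_solutions p c b"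
  define \<delta> where "\<delta> = Min ((\<lambda>k. Im (c k)) ` {..<p})"
  define C where "C = Im b / \<delta>"
  \<comment> \<open>Only the first p coordinates of R matter, and R is bounded there by C; truncating the
    other coordinates to 0 maps the solutions into the compact set K without changing Fmin.\<close>
  define K where "K = {R \<in> PiE UNIV (\<lambda>k. if k < p then {0..C} else {0}). (\<Sum>k<p. of_real (R k) * c k) = b}"
  define trunc where "trunc R k = (if k < p then R k else 0)" for R :: "nat \<Rightarrow> real" and k
  have \<delta>_pos: "0 < \<delta>"
    using p Im_pos by (auto simp: \<delta>_def Min_gr_iff lessThan_empty_iff)
  have bounded: "R k \<le> C" if R: "R \<in> ?S" and k: "k < p" for R k
  proof -
    have "R k * \<delta> \<le> R k * Im (c k)"
      using R k by (intro mult_left_mono) (auto simp: \<delta>_def positive_solutions_def less_imp_le)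
    also have "\<dots> \<le> (\<Sum>j<p. R j * Im (c j))"
      by (rule member_le_sum[where f = "\<lambda>j. R j * Im (c j)"])
        (use R k Im_pos in \<open>auto simp: positive_solutions_def less_imp_le\<close>)
    also have "\<dots> = Im b"
      using R by (auto simp: positive_solutions_def)
    finally show ?thesis
      using \<delta>_pos by (simp add: C_def field_simps)
  qed
  have trunc_in_K: "trunc R \<in> K" if R: "R \<in> ?S" for R
  proof -
    have "(\<Sum>k<p. of_real (trunc R k) * c k) = b"
      using R by (simp add: trunc_def positive_solutions_def)
    moreover have "trunc R \<in> PiE UNIV (\<lambda>k. if k < p then {0..C} else {0})"
      using R bounded[OF R] by (simp add: PiE_iff trunc_def positive_solutions_def less_imp_le)
    ultimately show ?thesis
      by (simp add: K_def)
  qed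
  have Fmin_trunc: "Fmin p (trunc R) = Fmin p R" for R
    by (intro Fmin_cong) (simp add: trunc_def)
  have "\<exists>X\<in>K. \<forall>Y\<in>K. Fmin p Y \<le> Fmin p X"
  proof (rule continuous_attains_sup)
    show "compact K"
      unfolding K_def by (rule compact_truncated_solutions)
    show "K \<noteq> {}"
      using trunc_in_K[OF X0] by blast
    show "continuous_on K (Fmin p)"
      using continuous_on_Fmin[OF p] by (rule continuous_on_subset) simp
  qed
  then obtain X where XK: "X \<in> K" and Xmax: "\<And>Y. Y \<in> K \<Longrightarrow> Fmin p Y \<le> Fmin p X"
    by blast
  have Fmin_le_X: "Fmin p Z \<le> Fmin p X" if "Z \<in> ?S" for Z
    using Xmax[OF trunc_in_K[OF that]] by (simp only: Fmin_trunc)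
  have "0 < Fmin p X"
    using Fmin_pos[OF p] Fmin_le_X[OF X0] X0 by (force simp: positive_solutions_def)
  then have "X \<in> ?S"
    using XK Fmin_le[of _ p X] by (force simp: K_def positive_solutions_def)
  then show ?thesis
    using Fmin_le_X by blast
qed

lemma Im_colA_pos:
  assumes "0 < \<theta>0" and "real (Suc k) * \<theta>0 < pi"
  shows "0 < Im (colA \<theta>0 k)"
proof -
  have "colA \<theta>0 k = \<i> * (1 - cis \<theta>0) * cis (real k * \<theta>0)"
    by (simp add: colA_def cis_conv_exp)
  then have "Im (colA \<theta>0 k) = cos (real k * \<theta>0) - cos (real (Suc k) * \<theta>0)"
    by (subst \<open>colA \<theta>0 k = _\<close>) (simp add: algebra_simps cos_add)
  moreover have "cos (real (Suc k) * \<theta>0) < cos (real k * \<theta>0)"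
    using assms by (intro cos_monotone_0_pi) (auto simp: algebra_simps)
  ultimately show ?thesis by simp
qed

lemma less_Suc_imp_mono_le:
  fixes a :: "nat \<Rightarrow> 'a::order"
  assumes "\<And>k. k < p \<Longrightarrow> a k < a (Suc k)" and "j \<le> k" and "k \<le> p"
  shows "a j \<le> a k"
  by (rule lift_Suc_mono_le_ivl[where N = "{..<p}"]) (use assms in \<open>auto simp: less_imp_le\<close>)

lemma between_breakpoints:
  fixes a :: "nat \<Rightarrow> 'a::linorder"
  assumes s: "a 0 \<le> s" "s \<le> a p" "s \<notin> a ` {..p}"
  obtains k where "k < p" "a k < s" "s < a (Suc k)"
proof -
  define K where "K = {k. k \<le> p \<and> a k < s}"
  have fin: "finite K"
    by (simp add: K_def)
  have "a 0 \<noteq> s"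
    using s(3) by auto
  then have "0 \<in> K"
    using s(1) by (simp add: K_def)
  then have k: "Max K \<in> K"
    using fin by (intro Max_in) auto
  have k_max: "j \<le> Max K" if "j \<in> K" for j
    using fin that by (rule Max_ge)
  have "Max K \<noteq> p"
    using k s by (auto simp: K_def)
  then have kp: "Max K < p"
    using k by (simp add: K_def)
  have "\<not> a (Suc (Max K)) < s"
  proof
    assume "a (Suc (Max K)) < s"
    then have "Suc (Max K) \<in> K"
      using kp by (simp add: K_def)
    then show False
      using k_max by fastforce
  qed
  moreover have "a (Suc (Max K)) \<noteq> s"
    using s(3) kp by auto
  moreover have "a (Max K) < s"
    using k by (simp add: K_def)
  ultimately show ?thesis
    using kp that by force
qed

lemma sum_indicator_breakpoints:
  fixes a c :: "nat \<Rightarrow> real"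
  assumes a: "\<And>k. k < p \<Longrightarrow> a k < a (Suc k)" and k: "k < p" "a k < s" "s < a (Suc k)"
  shows "(\<Sum>j<p. indicator {a j<..<a (Suc j)} s * c j) = c k"
proof -
  have "s \<notin> {a j<..<a (Suc j)}" if j: "j < p" "j \<noteq> k" for j
  proof (cases "j < k")
    case True
    then show ?thesis
      using less_Suc_imp_mono_le[where a = a and p = p, OF a, of "Suc j" k] k by auto
  next
    case False
    then show ?thesis
      using less_Suc_imp_mono_le[where a = a and p = p, OF a, of "Suc k" j] k j by auto
  qed
  then have "(\<Sum>j<p. indicator {a j<..<a (Suc j)} s * c j) = (\<Sum>j<p. if j = k then c k else 0)"
    using k by (intro sum.cong) auto
  then show ?thesis
    using k by simp
qed

lemma esssup_lebesgue_on_ge: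
  fixes f :: "'a::euclidean_space \<Rightarrow> ereal"
  assumes S: "S \<in> sets lebesgue" and I: "open I" "I \<noteq> {}" "I \<subseteq> S"
    and f: "\<And>x. x \<in> I \<Longrightarrow> v \<le> f x"
  shows "v \<le> esssup (lebesgue_on S) f"
proof (rule ccontr)
  assume "\<not> v \<le> esssup (lebesgue_on S) f"
  then have below: "esssup (lebesgue_on S) f < v"
    by simp
  have "AE x in lebesgue_on S. x \<notin> I"
    using esssup_AE[where M = "lebesgue_on S" and f = f]
  proof (rule eventually_mono)
    show "x \<notin> I" if "f x \<le> esssup (lebesgue_on S) f" for x
      using that below f[of x] by force
  qed
  then have "AE x in lebesgue. x \<in> S \<longrightarrow> x \<notin> I"
    using S by (subst (asm) AE_restrict_space_iff) auto
  then obtain N where N: "negligible N" "{x. \<not> (x \<in> S \<longrightarrow> x \<notin> I)} \<subseteq> N"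
    unfolding eventually_ae_filter_negligible by blast
  then have "negligible I"
    using I(3) by (intro negligible_subset[OF N(1)]) blast
  then show False
    using open_not_negligible[OF I(1,2)] by contradiction
qed

lemma esssup_step_function:
  fixes a c :: "nat \<Rightarrow> real" and F :: "real \<Rightarrow> real"
  assumes p: "0 < p" and a: "\<And>k. k < p \<Longrightarrow> a k < a (Suc k)"
    and F: "\<And>k s. k < p \<Longrightarrow> a k < s \<Longrightarrow> s < a (Suc k) \<Longrightarrow> F s = c k"
  shows "esssup (lebesgue_on {a 0..a p}) (\<lambda>s. ereal (F s)) = ereal (Max (c ` {..<p}))"
proof -
  let ?S = "{a 0..a p}" and ?M = "Max (c ` {..<p})"
  define N where "N = a ` {..p}"
  define G where "G s = (\<Sum>k<p. indicator {a k<..<a (Suc k)} s * c k)" for s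
  have on_piece: thesis
    if "s \<in> ?S - N" and "\<And>k. k < p \<Longrightarrow> a k < s \<Longrightarrow> s < a (Suc k) \<Longrightarrow> thesis" for s thesis
    using that between_breakpoints[of a s p] by (auto simp: N_def)
  have F_eq_G: "F s = G s" if "s \<in> ?S - N" for s
    using that
  proof (rule on_piece)
    fix k assume k: "k < p" "a k < s" "s < a (Suc k)"
    have "G s = c k"
      unfolding G_def by (rule sum_indicator_breakpoints[where a = a and p = p, OF a k])
    then show ?thesis
      using F[OF k] by simp
  qed
  have N_negligible: "negligible N"
    unfolding N_def by (intro negligible_finite) simp
  have "G \<in> borel_measurable (lebesgue_on ?S)"
    unfolding G_def by measurable (auto simp: id_borel_measurable_lebesgue_on[unfolded id_def])
  then have "G measurable_on ?S"
    by (simp add: measurable_on_iff_borel_measurable)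
  then have "F measurable_on ?S"
    by (rule measurable_on_spike[OF _ N_negligible F_eq_G])
  then have meas: "(\<lambda>s. ereal (F s)) \<in> borel_measurable (lebesgue_on ?S)"
    by (simp add: measurable_on_iff_borel_measurable)
  have "AE s in lebesgue. s \<notin> N"
    using N_negligible by (simp add: negligible_iff_null_sets AE_not_in)
  then have "AE s in lebesgue_on ?S. s \<in> ?S - N"
    by (subst AE_restrict_space_iff) (auto elim: eventually_mono)
  then have "AE s in lebesgue_on ?S. ereal (F s) \<le> ereal ?M"
    by (rule eventually_mono) (erule on_piece, simp add: F)
  then have "esssup (lebesgue_on ?S) (\<lambda>s. ereal (F s)) \<le> ereal ?M"
    by (rule esssup_I[OF meas])
  moreover have "ereal ?M \<le> esssup (lebesgue_on ?S) (\<lambda>s. ereal (F s))"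
  proof -
    have "?M \<in> c ` {..<p}"
      using p by (intro Max_in) auto
    then obtain k0 where k0: "k0 < p" "c k0 = ?M"
      by auto
    have I_sub: "{a k0<..<a (Suc k0)} \<subseteq> ?S"
      using less_Suc_imp_mono_le[where a = a and p = p, OF a, of 0 k0]
        less_Suc_imp_mono_le[where a = a and p = p, OF a, of "Suc k0" p] k0(1) by auto
    show ?thesis
      by (rule esssup_lebesgue_on_ge[OF _ open_greaterThanLessThan _ I_sub])
        (use a[OF k0(1)] F[OF k0(1)] k0(2) in auto)
  qed
  ultimately show ?thesis
    by (rule antisym)
qed

lemma norm_second_derivative_circle:
  fixes X :: "real \<Rightarrow> complex"
  assumes I: "open I" "t \<in> I" and r: "0 < r"
    and X: "\<And>s. s \<in> I \<Longrightarrow> X s = P + Q * exp (\<i> * of_real (s / r))"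
  shows "norm (vector_derivative (\<lambda>s. vector_derivative X (at s)) (at t)) = norm Q / r\<^sup>2"
proof -
  define G where "G z = P + Q * exp (\<i> * z / of_real r)" for z
  define G' where "G' z = \<i> * Q / of_real r * exp (\<i> * z / of_real r)" for z
  have dG: "(G has_field_derivative G' z) (at z)" for z
    unfolding G_def G'_def using r by (auto intro!: derivative_eq_intros simp: field_simps)
  have dG': "(G' has_field_derivative - Q / of_real (r\<^sup>2) * exp (\<i> * z / of_real r)) (at z)" for z
    unfolding G'_def using r by (auto intro!: derivative_eq_intros simp: field_simps power2_eq_square)
  have X_eq: "X s = G (of_real s)" if "s \<in> I" for s
    using X[OF that] by (simp add: G_def)
  have X': "vector_derivative X (at s) = G' (of_real s)" if "s \<in> I" for s
    by (rule vector_derivative_at, rule has_vector_derivative_transform_within_open[OF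
          has_vector_derivative_real_field[OF dG] I(1) that]) (simp add: X_eq)
  have "vector_derivative (\<lambda>s. vector_derivative X (at s)) (at t)
      = - Q / of_real (r\<^sup>2) * exp (\<i> * of_real t / of_real r)"
    by (rule vector_derivative_at, rule has_vector_derivative_transform_within_open[OF
          has_vector_derivative_real_field[OF dG'] I]) (simp add: X')
  also have "norm \<dots> = norm Q / r\<^sup>2"
    using r by (simp add: norm_mult norm_divide norm_power)
  finally show ?thesis .
qed

definition arc_start :: "real \<Rightarrow> (nat \<Rightarrow> real) \<Rightarrow> nat \<Rightarrow> real" where
  "arc_start \<theta>0 R k = \<theta>0 * (\<Sum>j<k. R j)"

lemma arc_start_0 [simp]: "arc_start \<theta>0 R 0 = 0"
  by (simp add: arc_start_def)

lemma arc_start_Suc: "arc_start \<theta>0 R (Suc k) = arc_start \<theta>0 R k + \<theta>0 * R k"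
  by (simp add: arc_start_def algebra_simps)

lemma arcs_len_eq_arc_start: "arcs_len p \<theta>0 R = arc_start \<theta>0 R p"
  by (simp add: arcs_len_def arc_start_def)

lemma arc_start_less_Suc: "0 < \<theta>0 \<Longrightarrow> 0 < R k \<Longrightarrow> arc_start \<theta>0 R k < arc_start \<theta>0 R (Suc k)"
  by (simp add: arc_start_Suc)

lemma arc_start_mono:
  assumes "0 < \<theta>0" and "\<forall>k<p. 0 < R k" and "j \<le> k" and "k \<le> p"
  shows "arc_start \<theta>0 R j \<le> arc_start \<theta>0 R k"
  by (rule less_Suc_imp_mono_le[where a = "arc_start \<theta>0 R"]) (use assms in \<open>auto intro: arc_start_less_Suc\<close>)

lemma arcs_frame_on_arc:
  assumes \<theta>0: "0 < \<theta>0" and R: "\<forall>k<p. 0 < R k" and k: "k < p"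
  obtains C where "\<And>s. arc_start \<theta>0 R k < s \<Longrightarrow> s < arc_start \<theta>0 R (Suc k) \<Longrightarrow>
    arcs_frame p \<theta>0 R s
      = C - \<i> * of_real (R k) * exp (\<i> * of_real (real k * \<theta>0 + (s - arc_start \<theta>0 R k) / R k))"
proof -
  let ?a = "arc_start \<theta>0 R"
  define T where "T j s = of_real (R j) * (- \<i>) *
      (exp (\<i> * of_real (real j * \<theta>0 + max 0 (min \<theta>0 ((s - ?a j) / R j))))
       - exp (\<i> * of_real (real j * \<theta>0)))" for j s
  have frame: "arcs_frame p \<theta>0 R s = T k s + (\<Sum>j\<in>{..<p}-{k}. T j s)" for s
    using k by (simp add: arcs_frame_def T_def arc_start_def sum.remove)
  have angle_other: "max 0 (min \<theta>0 ((s - ?a j) / R j)) = (if j < k then \<theta>0 else 0)"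
    if j: "j < p" "j \<noteq> k" and s: "?a k \<le> s" "s \<le> ?a (Suc k)" for j s
  proof (cases "j < k")
    case True
    then have "?a (Suc j) \<le> ?a k"
      using k by (intro arc_start_mono[OF \<theta>0 R]) auto
    then have "\<theta>0 \<le> (s - ?a j) / R j"
      using s j R by (simp add: arc_start_Suc pos_le_divide_eq)
    then show ?thesis using True \<theta>0 by simp
  next
    case False
    then have "?a (Suc k) \<le> ?a j"
      using j by (intro arc_start_mono[OF \<theta>0 R]) auto
    then have "(s - ?a j) / R j \<le> 0"
      using s j R by (simp add: divide_nonpos_pos)
    then show ?thesis using False \<theta>0 by simp
  qed
  have angle_k: "max 0 (min \<theta>0 ((s - ?a k) / R k)) = (s - ?a k) / R k"
    if "?a k < s" "s < ?a (Suc k)" for s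
    using that R k by (simp add: arc_start_Suc pos_divide_less_eq)
  show ?thesis
  proof
    fix s assume s: "?a k < s" "s < ?a (Suc k)"
    have "(\<Sum>j\<in>{..<p}-{k}. T j s) = (\<Sum>j\<in>{..<p}-{k}. T j (?a (Suc k)))"
      using s \<theta>0 R k by (intro sum.cong refl) (simp add: T_def angle_other arc_start_less_Suc)
    then show "arcs_frame p \<theta>0 R s
      = ((\<Sum>j\<in>{..<p}-{k}. T j (?a (Suc k))) + \<i> * of_real (R k) * exp (\<i> * of_real (real k * \<theta>0)))
        - \<i> * of_real (R k) * exp (\<i> * of_real (real k * \<theta>0 + (s - ?a k) / R k))"
      using s by (simp add: frame T_def angle_k algebra_simps)
  qed
qed

lemma norm_second_derivative_arcs_curve:
  assumes \<theta>0: "0 < \<theta>0" and R: "\<forall>k<p. 0 < R k" and k: "k < p" and \<alpha>: "norm \<alpha> = 1"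
    and s: "arc_start \<theta>0 R k < s" "s < arc_start \<theta>0 R (Suc k)"
  shows "norm (vector_derivative (\<lambda>t. vector_derivative (arcs_curve A \<alpha> p \<theta>0 R) (at t)) (at s)) = 1 / R k"
proof -
  let ?a = "arc_start \<theta>0 R k"
  obtain C where C: "\<And>t. ?a < t \<Longrightarrow> t < arc_start \<theta>0 R (Suc k) \<Longrightarrow>
    arcs_frame p \<theta>0 R t = C - \<i> * of_real (R k) * exp (\<i> * of_real (real k * \<theta>0 + (t - ?a) / R k))"
    using arcs_frame_on_arc[OF \<theta>0 R k] by blast
  define Q where "Q = - \<alpha> * \<i> * of_real (R k) * exp (\<i> * of_real (real k * \<theta>0 - ?a / R k))"
  have Rk: "0 < R k" using R k by simp
  have on_circle: "arcs_curve A \<alpha> p \<theta>0 R t = (A + \<alpha> * C) + Q * exp (\<i> * of_real (t / R k))"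
    if "t \<in> {?a <..< arc_start \<theta>0 R (Suc k)}" for t
  proof -
    have "real k * \<theta>0 + (t - ?a) / R k = (real k * \<theta>0 - ?a / R k) + t / R k"
      by (simp add: diff_divide_distrib)
    then have "exp (\<i> * of_real (real k * \<theta>0 + (t - ?a) / R k))
        = exp (\<i> * of_real (real k * \<theta>0 - ?a / R k)) * exp (\<i> * of_real (t / R k))"
      by (simp only: of_real_add distrib_left exp_add)
    moreover have "arcs_curve A \<alpha> p \<theta>0 R t
        = A + \<alpha> * (C - \<i> * of_real (R k) * exp (\<i> * of_real (real k * \<theta>0 + (t - ?a) / R k)))"
      using C that by (simp add: arcs_curve_def)
    ultimately show ?thesis
      by (simp add: Q_def algebra_simps)
  qed
  have "s \<in> {?a <..< arc_start \<theta>0 R (Suc k)}"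
    using s by simp
  with open_greaterThanLessThan
  have "norm (vector_derivative (\<lambda>t. vector_derivative (arcs_curve A \<alpha> p \<theta>0 R) (at t)) (at s))
      = norm Q / (R k)\<^sup>2"
    using Rk on_circle by (rule norm_second_derivative_circle)
  also have "norm Q = R k"
    using \<alpha> Rk by (simp add: Q_def norm_mult)
  also have "R k / (R k)\<^sup>2 = 1 / R k"
    using Rk by (simp add: power2_eq_square)
  finally show ?thesis .
qed

lemma Linf_curv_arcs_curve:
  assumes \<theta>0: "0 < \<theta>0" and R: "\<forall>k<p. 0 < R k" and p: "0 < p" and \<alpha>: "norm \<alpha> = 1"
  shows "Linf_curv (arcs_len p \<theta>0 R) (arcs_curve A \<alpha> p \<theta>0 R) = ereal (1 / Fmin p R)"
proof -
  have "Linf_curv (arcs_len p \<theta>0 R) (arcs_curve A \<alpha> p \<theta>0 R)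
      = ereal (Max ((\<lambda>k. 1 / R k) ` {..<p}))"
    unfolding Linf_curv_def arcs_len_eq_arc_start arc_start_0[of \<theta>0 R, symmetric]
    using \<theta>0 R \<alpha>
    by (intro esssup_step_function p arc_start_less_Suc norm_second_derivative_arcs_curve) auto
  also have "\<dots> = ereal (1 / Fmin p R)"
    using p R by (simp add: Max_reciprocal_eq_reciprocal_Fmin)
  finally show ?thesis .
qed

theorem theorem5p4:
  fixes Pt_O A B :: complex and p :: nat
  defines "\<alpha> \<equiv> unit_dir A Pt_O"
      and "\<beta> \<equiv> unit_dir Pt_O B"
  defines "\<Omega> \<equiv> Arg (\<beta> / \<alpha>)"
  defines "\<theta>0 \<equiv> \<Omega> / real p"
  defines "b \<equiv> (B - A) / \<alpha>"
  defines "curv \<equiv> (\<lambda>R. Linf_curv (arcs_len p \<theta>0 R) (arcs_curve A \<alpha> p \<theta>0 R))"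
  assumes "Pt_O \<noteq> A" and "A \<noteq> B" and "Pt_O \<noteq> B"
      and "0 < \<Omega>" and "\<Omega> < pi"
      and "2 \<le> p"
      and "Ep p \<theta>0 b \<noteq> {}"
  shows "(\<exists>X\<in>Ep p \<theta>0 b. \<forall>Z\<in>Ep p \<theta>0 b. curv X \<le> curv Z)
       \<and> (\<forall>X\<in>Ep p \<theta>0 b. (\<forall>Z\<in>Ep p \<theta>0 b. curv X \<le> curv Z)
                          \<longleftrightarrow> (\<forall>Z\<in>Ep p \<theta>0 b. Fmin p Z \<le> Fmin p X))
       \<and> (\<exists>X\<in>Ep p \<theta>0 b. \<forall>Z\<in>Ep p \<theta>0 b. Fmin p Z \<le> Fmin p X)"
proof -
  have p: "0 < p" and \<theta>0: "0 < \<theta>0"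
    using assms(10,12) by (auto simp: \<theta>0_def)
  have \<alpha>: "norm \<alpha> = 1"
    using assms(7) by (simp add: \<alpha>_def unit_dir_def norm_divide)
  have "0 < Im (colA \<theta>0 k)" if "k < p" for k
  proof (rule Im_colA_pos[OF \<theta>0])
    have "real (Suc k) * \<theta>0 \<le> real p * \<theta>0"
      using that \<theta>0 by (intro mult_right_mono) auto
    then show "real (Suc k) * \<theta>0 < pi"
      using assms(11,12) by (simp add: \<theta>0_def)
  qed
  then have max_Fmin: "\<exists>X\<in>Ep p \<theta>0 b. \<forall>Z\<in>Ep p \<theta>0 b. Fmin p Z \<le> Fmin p X"
    using assms(13) p unfolding Ep_eq_positive_solutions
    by (metis Fmin_attains_max_on_positive_solutions ex_in_conv)
  have "curv X \<le> curv Z \<longleftrightarrow> Fmin p Z \<le> Fmin p X" if "X \<in> Ep p \<theta>0 b" "Z \<in> Ep p \<theta>0 b" for X Z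
  proof -
    have "0 < Fmin p X" "0 < Fmin p Z"
      using that p by (auto intro: Fmin_pos simp: Ep_def)
    moreover have "curv R = ereal (1 / Fmin p R)" if "R \<in> Ep p \<theta>0 b" for R
      unfolding curv_def using that p \<theta>0 \<alpha> by (intro Linf_curv_arcs_curve) (auto simp: Ep_def)
    ultimately show ?thesis
      using that by (simp add: field_simps)
  qed
  then show ?thesis
    using max_Fmin by blast
qed

end
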